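(* Let $\Theta=(\theta_1,\theta_2,\theta_3)\in\mathbb{R}^3$ with $1,\theta_1,\theta_2,\theta_3$ linearly independent over $\mathbb{Z}$, and let $(x_l)$, $(\zeta_l)$, $(\mathbf{z}_l)$ be the associated best approximations, their errors and best approximation vectors. Let $\nu<k$ be indices and suppose that all vectors $\mathbf{z}_l$, $\nu\leqslant l\leqslant k$, lie in a certain two-dimensional linear subspace $\pi\subset\mathbb{R}^4$. Let $\Lambda=\pi\cap\mathbb{Z}^4$ be the corresponding two-dimensional lattice with two-dimensional fundamental volume $\det\Lambda$. Then for all $l$ with $\nu\leqslant l\leqslant k-1$, $$ C_1\det\Lambda\leqslant \zeta_l x_{l+1}\leqslant 2\det\Lambda, $$ where $$C_1=\left(2\sqrt{3\left(1+\left(|\theta_1|+\tfrac12\right)^2+\left(|\theta_2|+\tfrac12\right)^2+\left(|\theta_3|+\tfrac12\right)^2\right)}\right)^{-1}.$$ In particular, $\det\Lambda\geqslant \frac12\min(\zeta_\nu x_{\nu+1},\ \zeta_{k-1}x_k)$.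
   Context: For a real number $u$, $\|u\|$ is the distance from $u$ to the nearest integer. For an integer $x$ put $\zeta(x)=\max_{1\leqslant j\leqslant 3}\|\theta_j x\|$. A positive integer $x$ is a best approximation if $\zeta(x)=\min\{\zeta(x'): x'\in\mathbb{Z},\ 0<x'\leqslant x\}$. When $1,\theta_1,\theta_2,\theta_3$ are linearly independent over $\mathbb{Z}$, the best approximations form a sequence $x_1<x_2<\dots$ with $\zeta_1>\zeta_2>\dots$, where $\zeta_\nu=\zeta(x_\nu)$. Choose integers $y_{j,\nu}$ with $\|\theta_j x_\nu\|=|\theta_j x_\nu-y_{j,\nu}|$, and put $\mathbf{z}_\nu=(x_\nu,y_{1,\nu},y_{2,\nu},y_{3,\nu})\in\mathbb{Z}^4$ (the best approximation vectors). *)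

theory Defs
  imports "HOL-Analysis.Analysis"
begin

definition ndist :: "real \<Rightarrow> real" where
  "ndist u = infdist u \<int>"

definition zeta :: "real \<Rightarrow> real \<Rightarrow> real \<Rightarrow> int \<Rightarrow> real" where
  "zeta t1 t2 t3 x = Max {ndist (t1 * real_of_int x), ndist (t2 * real_of_int x), ndist (t3 * real_of_int x)}"

definition best_approx :: "real \<Rightarrow> real \<Rightarrow> real \<Rightarrow> int \<Rightarrow> bool" where
  "best_approx t1 t2 t3 x \<longleftrightarrow> 0 < x \<and>
     zeta t1 t2 t3 x = Min {zeta t1 t2 t3 x' | x'. 0 < x' \<and> x' \<le> x}"

definition int_points :: "(real^4) set \<Rightarrow> (real^4) set" where
  "int_points S = {v \<in> S. \<forall>i. v $ i \<in> \<int>}"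

definition covol2 :: "(real^4) set \<Rightarrow> real" where
  "covol2 L = (THE d. \<exists>u v. u \<in> L \<and> v \<in> L \<and>
      L = {of_int a *\<^sub>R u + of_int b *\<^sub>R v | a b. True} \<and>
      d = sqrt ((u \<bullet> u) * (v \<bullet> v) - (u \<bullet> v)\<^sup>2))"

end

theory Submission
  imports Defs
begin

text \<open>Two consecutive best approximation vectors \<open>z\<^sub>l, z\<^sub>l\<^sub>+\<^sub>1\<close> form a basis of \<open>\<Lambda>\<close>: an integer
  point \<open>a z\<^sub>l + b z\<^sub>l\<^sub>+\<^sub>1\<close> with \<open>0 \<le> a, b < 1\<close>, \<open>0 < a + b \<le> 1\<close> would have denominator below
  \<open>x\<^sub>l\<^sub>+\<^sub>1\<close> and error below \<open>\<zeta>\<^sub>l\<close>. So \<open>det \<Lambda>\<close> is the square root of their Gram determinant.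
  For the upper bound, the Gram determinant dominates the squares of the minors
  \<open>x\<^sub>l\<^sub>+\<^sub>1 (\<theta>\<^sub>j x\<^sub>l - y\<^sub>j\<^sub>,\<^sub>l) - x\<^sub>l (\<theta>\<^sub>j x\<^sub>l\<^sub>+\<^sub>1 - y\<^sub>j\<^sub>,\<^sub>l\<^sub>+\<^sub>1)\<close>, and comparing \<open>z\<^sub>l\<close> with the competitor
  \<open>z\<^sub>l\<^sub>+\<^sub>1 - z\<^sub>l\<close> shows that the largest of them is at least \<open>x\<^sub>l\<^sub>+\<^sub>1 \<zeta>\<^sub>l / 2\<close>. For the lower bound,
  the Gram determinant is at most \<open>|z\<^sub>l\<^sub>+\<^sub>1|\<^sup>2 |z\<^sub>l - \<tau> z\<^sub>l\<^sub>+\<^sub>1|\<^sup>2\<close> with \<open>\<tau> = x\<^sub>l / x\<^sub>l\<^sub>+\<^sub>1\<close>; the second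
  vector has first coordinate \<open>0\<close> and is made of approximation errors, hence is \<open>O(\<zeta>\<^sub>l)\<close>.\<close>

section \<open>Approximation errors\<close>

lemma ndist_le: "m \<in> \<int> \<Longrightarrow> ndist u \<le> \<bar>u - m\<bar>"
  unfolding ndist_def using infdist_le[of m \<int> u] by (simp add: dist_real_def)

lemma ndist_le_half: "ndist u \<le> 1/2"
proof -
  have "ndist u \<le> \<bar>u - of_int (round u)\<bar>" by (rule ndist_le) simp
  also have "\<dots> \<le> 1/2" using of_int_round_abs_le[of u] by linarith
  finally show ?thesis .
qed

lemma best_approx_iff:
  "best_approx t1 t2 t3 n \<longleftrightarrow> 0 < n \<and> (\<forall>m. 0 < m \<longrightarrow> m \<le> n \<longrightarrow> zeta t1 t2 t3 n \<le> zeta t1 t2 t3 m)"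
proof -
  have "{zeta t1 t2 t3 m | m. 0 < m \<and> m \<le> n} = zeta t1 t2 t3 ` {1..n}"
    by (auto simp: image_def)
  then show ?thesis
    unfolding best_approx_def by (auto simp: eq_Min_iff)
qed

definition theta_vec :: "real \<Rightarrow> real \<Rightarrow> real \<Rightarrow> real^4" where
  "theta_vec t1 t2 t3 = (\<chi> i. if i = 1 then 1 else if i = 2 then t1 else if i = 3 then t2 else t3)"

lemma theta_vec_nth [simp]:
  "theta_vec t1 t2 t3 $ 1 = 1" "theta_vec t1 t2 t3 $ 2 = t1"
  "theta_vec t1 t2 t3 $ 3 = t2" "theta_vec t1 t2 t3 $ 4 = t3"
  by (simp_all add: theta_vec_def)

text \<open>For \<open>w = (x, y\<^sub>1, y\<^sub>2, y\<^sub>3)\<close> and \<open>\<Theta> = (1, \<theta>\<^sub>1, \<theta>\<^sub>2, \<theta>\<^sub>3)\<close>, the coordinates \<open>2..4\<close> of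
  \<open>approx_err \<Theta> w\<close> are the signed errors \<open>\<theta>\<^sub>j x - y\<^sub>j\<close>; the point is that this map is linear in \<open>w\<close>.\<close>
definition approx_err :: "real^4 \<Rightarrow> real^4 \<Rightarrow> real^4" where
  "approx_err \<Theta> w = w $ 1 *\<^sub>R \<Theta> - w"

lemma approx_err_add: "approx_err \<Theta> (v + w) = approx_err \<Theta> v + approx_err \<Theta> w"
  and approx_err_diff: "approx_err \<Theta> (v - w) = approx_err \<Theta> v - approx_err \<Theta> w"
  and approx_err_scaleR: "approx_err \<Theta> (c *\<^sub>R w) = c *\<^sub>R approx_err \<Theta> w"
  by (simp_all add: approx_err_def algebra_simps)

definition tail_norm :: "real^4 \<Rightarrow> real" where
  "tail_norm w = max \<bar>w $ 2\<bar> (max \<bar>w $ 3\<bar> \<bar>w $ 4\<bar>)"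

lemma tail_norm_nonneg: "0 \<le> tail_norm w"
  by (simp add: tail_norm_def le_max_iff_disj)

lemma abs_nth_le_tail_norm: "\<bar>w $ 2\<bar> \<le> tail_norm w" "\<bar>w $ 3\<bar> \<le> tail_norm w" "\<bar>w $ 4\<bar> \<le> tail_norm w"
  by (simp_all add: tail_norm_def le_max_iff_disj)

lemma tail_norm_eq_abs_nth: "\<exists>i\<in>{2, 3, 4}. tail_norm w = \<bar>w $ i\<bar>"
  by (auto simp: tail_norm_def max_def)

lemma tail_norm_add_le: "tail_norm (v + w) \<le> tail_norm v + tail_norm w"
proof -
  have "\<bar>(v + w) $ i\<bar> \<le> tail_norm v + tail_norm w" if "i \<in> {2, 3, 4}" for i
    using abs_triangle_ineq[of "v $ i" "w $ i"] abs_nth_le_tail_norm[of v] abs_nth_le_tail_norm[of w] that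
    by auto
  then show ?thesis
    unfolding tail_norm_def[of "v + w"] by simp
qed

lemma tail_norm_scaleR: "tail_norm (c *\<^sub>R w) = \<bar>c\<bar> * tail_norm w"
  by (simp add: tail_norm_def abs_mult max_mult_distrib_left)

lemma tail_norm_minus: "tail_norm (- w) = tail_norm w"
  by (simp add: tail_norm_def)

lemma tail_norm_diff_le: "tail_norm (v - w) \<le> tail_norm v + tail_norm w"
  using tail_norm_add_le[of v "- w"] by (simp add: tail_norm_minus)

lemma inner_self_le_tail_norm:
  assumes "w $ 1 = 0"
  shows "w \<bullet> w \<le> 3 * (tail_norm w)\<^sup>2"
proof -
  have "(w $ 2)\<^sup>2 \<le> (tail_norm w)\<^sup>2" "(w $ 3)\<^sup>2 \<le> (tail_norm w)\<^sup>2" "(w $ 4)\<^sup>2 \<le> (tail_norm w)\<^sup>2"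
    using abs_nth_le_tail_norm[of w] tail_norm_nonneg[of w] by (simp_all add: abs_le_square_iff[symmetric])
  then show ?thesis
    using assms by (simp add: inner_vec_def sum_4 power2_eq_square[symmetric])
qed

lemma zeta_le_tail_norm_approx_err:
  assumes "\<forall>i. w $ i \<in> \<int>" "w $ 1 = of_int n"
  shows "zeta t1 t2 t3 n \<le> tail_norm (approx_err (theta_vec t1 t2 t3) w)"
  using ndist_le[of "w $ 2" "t1 * of_int n"] ndist_le[of "w $ 3" "t2 * of_int n"]
    ndist_le[of "w $ 4" "t3 * of_int n"] assms
  by (auto simp: zeta_def tail_norm_def approx_err_def mult.commute intro: max.mono)

section \<open>Gram determinants and planar lattices\<close>

definition gram :: "'a::real_inner \<Rightarrow> 'a \<Rightarrow> real" where
  "gram u v = (u \<bullet> u) * (v \<bullet> v) - (u \<bullet> v)\<^sup>2"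

lemma gram_lincomb:
  "gram (a *\<^sub>R u + b *\<^sub>R v) (c *\<^sub>R u + d *\<^sub>R v) = (a * d - b * c)\<^sup>2 * gram u v"
proof -
  have inner_lincomb: "(a *\<^sub>R u + b *\<^sub>R v) \<bullet> (c *\<^sub>R u + d *\<^sub>R v)
      = a * c * (u \<bullet> u) + (a * d + b * c) * (u \<bullet> v) + b * d * (v \<bullet> v)" for a b c d
    by (simp add: inner_add_left inner_add_right inner_commute[of v u] algebra_simps)
  show ?thesis
    unfolding gram_def inner_lincomb[of a b c d] inner_lincomb[of a b a b] inner_lincomb[of c d c d]
    by (simp add: power2_eq_square algebra_simps)
qed

lemma gram_pos_imp_independent:
  assumes "0 < gram u v" "s *\<^sub>R u + t *\<^sub>R v = 0"
  shows "s = 0 \<and> t = 0"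
proof -
  have u_eq: "s * (u \<bullet> u) + t * (u \<bullet> v) = 0"
    using arg_cong[OF assms(2), of "\<lambda>w. u \<bullet> w"] by (simp add: inner_add_right)
  have v_eq: "s * (u \<bullet> v) + t * (v \<bullet> v) = 0"
    using arg_cong[OF assms(2), of "\<lambda>w. v \<bullet> w"] by (simp add: inner_add_right inner_commute)
  have "s * gram u v = (s * (u \<bullet> u) + t * (u \<bullet> v)) * (v \<bullet> v) - (s * (u \<bullet> v) + t * (v \<bullet> v)) * (u \<bullet> v)"
    and "t * gram u v = (s * (u \<bullet> v) + t * (v \<bullet> v)) * (u \<bullet> u) - (s * (u \<bullet> u) + t * (u \<bullet> v)) * (u \<bullet> v)"
    unfolding gram_def by (simp_all add: power2_eq_square algebra_simps)
  then have "s * gram u v = 0" "t * gram u v = 0"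
    by (simp_all only: u_eq v_eq mult_zero_left diff_self)
  then show ?thesis
    using assms(1) by simp
qed

text \<open>Lagrange's identity: the Gram determinant is the sum of all six squared \<open>2 \<times> 2\<close> minors.\<close>
lemma tail_norm_minors_sq_le_gram:
  fixes u v :: "real^4"
  shows "(tail_norm (u $ 1 *\<^sub>R v - v $ 1 *\<^sub>R u))\<^sup>2 \<le> gram u v"
proof -
  define m where "m = u $ 1 *\<^sub>R v - v $ 1 *\<^sub>R u"
  have "gram u v = (m $ 2)\<^sup>2 + (m $ 3)\<^sup>2 + (m $ 4)\<^sup>2 + (u $ 2 * v $ 3 - u $ 3 * v $ 2)\<^sup>2
      + (u $ 2 * v $ 4 - u $ 4 * v $ 2)\<^sup>2 + (u $ 3 * v $ 4 - u $ 4 * v $ 3)\<^sup>2"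
    unfolding gram_def m_def inner_vec_def sum_4 by (simp add: power2_eq_square algebra_simps)
  then have "(m $ i)\<^sup>2 \<le> gram u v" if "i \<in> {2, 3, 4}" for i
    using that by auto
  then show ?thesis
    using tail_norm_eq_abs_nth[of m] unfolding m_def[symmetric] by auto
qed

lemma gram_le_inner_mult: "gram u v \<le> (v \<bullet> v) * ((u - c *\<^sub>R v) \<bullet> (u - c *\<^sub>R v))"
proof -
  have "(v \<bullet> v) * ((u - c *\<^sub>R v) \<bullet> (u - c *\<^sub>R v)) - gram u v = (u \<bullet> v - c * (v \<bullet> v))\<^sup>2"
    unfolding gram_def
    by (simp add: inner_diff_left inner_diff_right inner_commute[of v u] power2_eq_square algebra_simps)
  then show ?thesis
    by (metis diff_ge_0_iff_ge zero_le_power2)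
qed

definition int_span :: "'a::real_vector \<Rightarrow> 'a \<Rightarrow> 'a set" where
  "int_span u v = {of_int a *\<^sub>R u + of_int b *\<^sub>R v | a b. True}"

lemma left_in_int_span: "u \<in> int_span u v"
  and right_in_int_span: "v \<in> int_span u v"
  unfolding int_span_def by (force intro: exI[of _ 1] exI[of _ 0])+

lemma int_span_coeffs_unique:
  assumes "0 < gram u v" "of_int a *\<^sub>R u + of_int b *\<^sub>R v = of_int c *\<^sub>R u + of_int d *\<^sub>R v"
  shows "a = c \<and> b = d"
proof -
  have "of_int (a - c) *\<^sub>R u + of_int (b - d) *\<^sub>R v = 0"
    using assms(2) by (simp add: algebra_simps)
  from gram_pos_imp_independent[OF assms(1) this] show ?thesis
    by simp
qed

text \<open>Two bases of the same lattice differ by an integer matrix of determinant \<open>\<plusminus>1\<close>.\<close>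
lemma gram_eq_if_int_span_eq:
  assumes "0 < gram u v" "int_span u' v' = int_span u v"
  shows "gram u' v' = gram u v"
proof -
  have "u' \<in> int_span u v" "v' \<in> int_span u v" "u \<in> int_span u' v'" "v \<in> int_span u' v'"
    using left_in_int_span right_in_int_span assms(2) by metis+
  then obtain a b c d p q r s
    where u': "u' = of_int a *\<^sub>R u + of_int b *\<^sub>R v" and v': "v' = of_int c *\<^sub>R u + of_int d *\<^sub>R v"
      and u: "u = of_int p *\<^sub>R u' + of_int q *\<^sub>R v'" and v: "v = of_int r *\<^sub>R u' + of_int s *\<^sub>R v'"
    unfolding int_span_def by blast
  have "of_int 1 *\<^sub>R u + of_int 0 *\<^sub>R v = of_int p *\<^sub>R u' + of_int q *\<^sub>R v'"
    using u by simp
  also have "\<dots> = of_int (p * a + q * c) *\<^sub>R u + of_int (p * b + q * d) *\<^sub>R v"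
    unfolding u' v' by (simp add: algebra_simps)
  finally have coeffs_u: "1 = p * a + q * c \<and> 0 = p * b + q * d"
    by (rule int_span_coeffs_unique[OF assms(1)])
  have "of_int 0 *\<^sub>R u + of_int 1 *\<^sub>R v = of_int r *\<^sub>R u' + of_int s *\<^sub>R v'"
    using v by simp
  also have "\<dots> = of_int (r * a + s * c) *\<^sub>R u + of_int (r * b + s * d) *\<^sub>R v"
    unfolding u' v' by (simp add: algebra_simps)
  finally have coeffs_v: "0 = r * a + s * c \<and> 1 = r * b + s * d"
    by (rule int_span_coeffs_unique[OF assms(1)])
  have "(p * s - q * r) * (a * d - b * c) = (p * a + q * c) * (r * b + s * d) - (p * b + q * d) * (r * a + s * c)"
    by (simp add: algebra_simps)
  then have "(p * s - q * r) * (a * d - b * c) = 1"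
    using coeffs_u coeffs_v by simp
  then have "a * d - b * c = 1 \<or> a * d - b * c = -1"
    by (auto simp: zmult_eq_1_iff)
  then have "(real_of_int a * real_of_int d - real_of_int b * real_of_int c)\<^sup>2 = 1"
    by (metis (mono_tags, opaque_lifting) of_int_1 of_int_diff of_int_minus of_int_mult power2_minus power_one)
  then show ?thesis
    unfolding u' v' gram_lincomb by simp
qed

lemma covol2_int_span:
  fixes u v :: "real^4"
  assumes "0 < gram u v"
  shows "covol2 (int_span u v) = sqrt (gram u v)"
  unfolding covol2_def int_span_def[symmetric] gram_def[symmetric]
proof (rule the_equality)
  show "\<exists>u' v'. u' \<in> int_span u v \<and> v' \<in> int_span u v \<and> int_span u v = int_span u' v' \<and>
      sqrt (gram u v) = sqrt (gram u' v')"
    by (intro exI[of _ u] exI[of _ v] conjI left_in_int_span right_in_int_span refl)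
next
  fix d assume "\<exists>u' v'. u' \<in> int_span u v \<and> v' \<in> int_span u v \<and> int_span u v = int_span u' v' \<and>
      d = sqrt (gram u' v')"
  then obtain u' v' where same_span: "int_span u' v' = int_span u v" and d: "d = sqrt (gram u' v')"
    by (elim exE conjE) (rule that, simp_all)
  show "d = sqrt (gram u v)"
    unfolding d gram_eq_if_int_span_eq[OF assms same_span] ..
qed

lemma mem_span_pair_if_dim_2:
  fixes u v w :: "'a::euclidean_space"
  assumes "dim S = 2" "u \<in> S" "v \<in> S" "0 < gram u v" "w \<in> S"
  obtains \<alpha> \<beta> where "w = \<alpha> *\<^sub>R u + \<beta> *\<^sub>R v"
proof -
  have "v \<noteq> 0"
    using gram_pos_imp_independent[OF assms(4), of 0 1] by auto
  moreover have u_notin: "u \<notin> span {v}"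
  proof
    assume "u \<in> span {v}"
    then obtain c where "1 *\<^sub>R u + (- c) *\<^sub>R v = 0"
      by (auto simp: span_singleton)
    from gram_pos_imp_independent[OF assms(4) this] show False
      by simp
  qed
  moreover have "u \<noteq> v"
    using u_notin span_base by blast
  ultimately have "independent {u, v}" "card {u, v} = 2"
    by (simp_all add: independent_insert)
  then have "S \<subseteq> span {u, v}"
    using card_eq_dim[of "{u, v}" S] assms(1-3) by simp
  then obtain \<alpha> where "w - \<alpha> *\<^sub>R u \<in> span {v}"
    using assms(5) span_breakdown_eq[of w u "{v}"] by auto
  then obtain \<beta> where "w - \<alpha> *\<^sub>R u = \<beta> *\<^sub>R v"
    by (auto simp: span_singleton)
  then show ?thesis
    using that[of \<alpha> \<beta>] by (simp add: algebra_simps)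
qed

text \<open>By the symmetry \<open>p \<mapsto> u + v - p\<close> an empty triangle makes the whole half-open fundamental
  parallelogram free of integer points.\<close>
lemma int_points_eq_int_span:
  assumes "subspace S" "dim S = 2" "u \<in> S" "v \<in> S" "0 < gram u v"
    and u_int: "\<forall>i. u $ i \<in> \<int>" and v_int: "\<forall>i. v $ i \<in> \<int>"
    and empty_triangle: "\<And>a b. 0 \<le> a \<Longrightarrow> a < 1 \<Longrightarrow> 0 \<le> b \<Longrightarrow> b < 1 \<Longrightarrow> a + b \<le> 1 \<Longrightarrow>
      \<forall>i. (a *\<^sub>R u + b *\<^sub>R v) $ i \<in> \<int> \<Longrightarrow> a = 0 \<and> b = 0"
  shows "int_points S = int_span u v"
proof
  have int_comb: "(a *\<^sub>R u + b *\<^sub>R v) $ i \<in> \<int>" if "a \<in> \<int>" "b \<in> \<int>" for a b i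
    using u_int v_int that by simp
  show "int_span u v \<subseteq> int_points S"
    using assms(1,3,4) int_comb
    by (auto simp: int_span_def int_points_def intro!: subspace_add subspace_scale)
  show "int_points S \<subseteq> int_span u v"
  proof
    fix w assume "w \<in> int_points S"
    then have "w \<in> S" and w_int: "\<forall>i. w $ i \<in> \<int>"
      by (auto simp: int_points_def)
    then obtain \<alpha> \<beta> where w: "w = \<alpha> *\<^sub>R u + \<beta> *\<^sub>R v"
      using mem_span_pair_if_dim_2[OF assms(2-5)] by blast
    define a where "a = frac \<alpha>"
    define b where "b = frac \<beta>"
    have ab: "0 \<le> a" "a < 1" "0 \<le> b" "b < 1"
      by (simp_all add: a_def b_def frac_lt_1)
    have w_split: "w = of_int \<lfloor>\<alpha>\<rfloor> *\<^sub>R u + of_int \<lfloor>\<beta>\<rfloor> *\<^sub>R v + (a *\<^sub>R u + b *\<^sub>R v)"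
      by (simp add: w a_def b_def frac_def algebra_simps)
    have p_int: "\<forall>i. (a *\<^sub>R u + b *\<^sub>R v) $ i \<in> \<int>"
      using w_int int_comb[of "of_int \<lfloor>\<alpha>\<rfloor>" "of_int \<lfloor>\<beta>\<rfloor>"]
      by (metis w_split Ints_diff Ints_of_int add_diff_cancel_left' vector_minus_component)
    have "a = 0 \<and> b = 0"
    proof (cases "a + b \<le> 1")
      case True
      then show ?thesis
        using empty_triangle[OF ab _ p_int] by simp
    next
      case False
      have "(1 - a) *\<^sub>R u + (1 - b) *\<^sub>R v = (1 *\<^sub>R u + 1 *\<^sub>R v) - (a *\<^sub>R u + b *\<^sub>R v)"
        by (simp add: algebra_simps)
      then have "\<forall>i. ((1 - a) *\<^sub>R u + (1 - b) *\<^sub>R v) $ i \<in> \<int>"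
        using p_int int_comb[of 1 1] by (simp del: scaleR_one add: Ints_diff)
      then have "1 - a = 0"
        using empty_triangle[of "1 - a" "1 - b"] ab False by simp
      then show ?thesis
        using ab False by simp
    qed
    then show "w \<in> int_span u v"
      unfolding int_span_def using w_split by auto
  qed
qed

section \<open>Consecutive best approximation vectors\<close>

lemma minors_eq_approx_err:
  "u $ 1 *\<^sub>R v - v $ 1 *\<^sub>R u = v $ 1 *\<^sub>R approx_err \<Theta> u - u $ 1 *\<^sub>R approx_err \<Theta> v"
  by (simp add: approx_err_def algebra_simps)

lemma inner_self_le_if_approx_err_le_half:
  assumes "1 \<le> v $ 1" "tail_norm (approx_err \<Theta> v) \<le> 1/2"
  shows "v \<bullet> v \<le> (v $ 1)\<^sup>2 * (1 + (\<bar>\<Theta> $ 2\<bar> + 1/2)\<^sup>2 + (\<bar>\<Theta> $ 3\<bar> + 1/2)\<^sup>2 + (\<bar>\<Theta> $ 4\<bar> + 1/2)\<^sup>2)"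
proof -
  have "(v $ i)\<^sup>2 \<le> (v $ 1)\<^sup>2 * (\<bar>\<Theta> $ i\<bar> + 1/2)\<^sup>2" if "i \<in> {2, 3, 4}" for i
  proof -
    have "\<bar>(approx_err \<Theta> v) $ i\<bar> \<le> 1/2"
      using abs_nth_le_tail_norm[of "approx_err \<Theta> v"] assms(2) that by auto
    moreover have "\<bar>v $ i\<bar> \<le> \<bar>v $ 1 * \<Theta> $ i\<bar> + \<bar>(approx_err \<Theta> v) $ i\<bar>"
      using abs_triangle_ineq4[of "v $ 1 * \<Theta> $ i" "(approx_err \<Theta> v) $ i"] by (simp add: approx_err_def)
    moreover have "\<bar>v $ 1 * \<Theta> $ i\<bar> = \<bar>\<Theta> $ i\<bar> * v $ 1"
      using assms(1) by (simp add: abs_mult)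
    ultimately have "\<bar>v $ i\<bar> \<le> \<bar>\<Theta> $ i\<bar> * v $ 1 + 1/2"
      by linarith
    also have "\<dots> \<le> (\<bar>\<Theta> $ i\<bar> + 1/2) * v $ 1"
      using assms(1) by (simp add: algebra_simps)
    finally have "\<bar>v $ i\<bar>\<^sup>2 \<le> ((\<bar>\<Theta> $ i\<bar> + 1/2) * v $ 1)\<^sup>2"
      by (rule power_mono) simp
    then show ?thesis
      by (simp add: power_mult_distrib mult.commute)
  qed
  from this[of 2] this[of 3] this[of 4] have "v \<bullet> v \<le> (v $ 1)\<^sup>2 + (v $ 1)\<^sup>2 * (\<bar>\<Theta> $ 2\<bar> + 1/2)\<^sup>2
      + (v $ 1)\<^sup>2 * (\<bar>\<Theta> $ 3\<bar> + 1/2)\<^sup>2 + (v $ 1)\<^sup>2 * (\<bar>\<Theta> $ 4\<bar> + 1/2)\<^sup>2"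
    by (simp add: inner_vec_def sum_4 power2_eq_square[symmetric])
  then show ?thesis
    by (simp add: algebra_simps)
qed

text \<open>Two consecutive best approximation vectors, described only through the properties the
  estimates use; \<open>err_minimal\<close> is the best approximation property of \<open>u\<close> relative to \<open>v $ 1\<close>.\<close>
locale consecutive_pair =
  fixes \<Theta> u v :: "real^4"
  assumes u_int: "\<forall>i. u $ i \<in> \<int>" and v_int: "\<forall>i. v $ i \<in> \<int>"
    and u_1_pos: "0 < u $ 1" and u_1_less: "u $ 1 < v $ 1"
    and err_less: "tail_norm (approx_err \<Theta> v) < tail_norm (approx_err \<Theta> u)"
    and err_minimal: "\<And>w. \<forall>i. w $ i \<in> \<int> \<Longrightarrow> 0 < w $ 1 \<Longrightarrow> w $ 1 < v $ 1 \<Longrightarrow>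
      tail_norm (approx_err \<Theta> u) \<le> tail_norm (approx_err \<Theta> w)"
begin

abbreviation "\<zeta>\<^sub>u \<equiv> tail_norm (approx_err \<Theta> u)"
abbreviation "\<zeta>\<^sub>v \<equiv> tail_norm (approx_err \<Theta> v)"

lemma zeta_u_pos: "0 < \<zeta>\<^sub>u"
  using err_less tail_norm_nonneg[of "approx_err \<Theta> v"] by linarith

lemma empty_triangle:
  assumes ab: "0 \<le> a" "a < 1" "0 \<le> b" "b < 1" "a + b \<le> 1"
    and w_int: "\<forall>i. (a *\<^sub>R u + b *\<^sub>R v) $ i \<in> \<int>"
  shows "a = 0 \<and> b = 0"
proof (rule ccontr)
  assume nonzero: "\<not> (a = 0 \<and> b = 0)"
  have "0 < a * u $ 1 + b * v $ 1"
    using nonzero ab u_1_pos u_1_less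
    by (metis add_nonneg_pos add_pos_nonneg less_eq_real_def mult_nonneg_nonneg mult_pos_pos order_less_trans)
  moreover have "a * u $ 1 + b * v $ 1 < v $ 1"
  proof (cases "a = 0")
    case True
    then show ?thesis
      using ab u_1_pos u_1_less by simp
  next
    case False
    then have "a * u $ 1 < a * v $ 1"
      using ab u_1_less by simp
    moreover have "(a + b) * v $ 1 \<le> v $ 1"
      using ab u_1_pos u_1_less by (simp add: mult_left_le_one_le)
    ultimately show ?thesis
      by (simp add: algebra_simps)
  qed
  ultimately have "\<zeta>\<^sub>u \<le> tail_norm (approx_err \<Theta> (a *\<^sub>R u + b *\<^sub>R v))"
    using err_minimal[OF w_int] by simp
  also have "\<dots> \<le> a * \<zeta>\<^sub>u + b * \<zeta>\<^sub>v"
    unfolding approx_err_add approx_err_scaleR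
    by (rule order_trans[OF tail_norm_add_le]) (simp add: tail_norm_scaleR ab)
  also have "\<dots> < \<zeta>\<^sub>u"
  proof (cases "b = 0")
    case True
    then show ?thesis
      using ab zeta_u_pos by simp
  next
    case False
    then have "b * \<zeta>\<^sub>v < b * \<zeta>\<^sub>u"
      using ab err_less by simp
    moreover have "(a + b) * \<zeta>\<^sub>u \<le> \<zeta>\<^sub>u"
      using ab zeta_u_pos by (simp add: mult_left_le_one_le)
    ultimately show ?thesis
      by (simp add: algebra_simps)
  qed
  finally show False
    by simp
qed

text \<open>The competitor \<open>v - u\<close> gives a second bound besides the one for \<open>u\<close>; in their sum the
  error terms of \<open>v\<close> add up to \<open>v $ 1 \<cdot> \<zeta>\<^sub>v \<le> v $ 1 \<cdot> \<zeta>\<^sub>u\<close>.\<close>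
lemma le_twice_tail_norm_minors: "v $ 1 * \<zeta>\<^sub>u \<le> 2 * tail_norm (u $ 1 *\<^sub>R v - v $ 1 *\<^sub>R u)"
proof -
  define m where "m = u $ 1 *\<^sub>R v - v $ 1 *\<^sub>R u"
  define e\<^sub>u where "e\<^sub>u = approx_err \<Theta> u"
  define e\<^sub>v where "e\<^sub>v = approx_err \<Theta> v"
  have m: "m = v $ 1 *\<^sub>R e\<^sub>u - u $ 1 *\<^sub>R e\<^sub>v"
    unfolding m_def e\<^sub>u_def e\<^sub>v_def by (rule minors_eq_approx_err)
  have "v $ 1 * \<zeta>\<^sub>u = tail_norm (v $ 1 *\<^sub>R e\<^sub>u)"
    using u_1_pos u_1_less by (simp add: e\<^sub>u_def tail_norm_scaleR)
  also have "v $ 1 *\<^sub>R e\<^sub>u = m + u $ 1 *\<^sub>R e\<^sub>v"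
    by (simp add: m)
  also have "tail_norm \<dots> \<le> tail_norm m + u $ 1 * \<zeta>\<^sub>v"
    by (rule order_trans[OF tail_norm_add_le]) (simp add: e\<^sub>v_def tail_norm_scaleR abs_of_pos[OF u_1_pos])
  finally have first: "v $ 1 * \<zeta>\<^sub>u \<le> tail_norm m + u $ 1 * \<zeta>\<^sub>v" .
  have "\<zeta>\<^sub>u \<le> tail_norm (e\<^sub>v - e\<^sub>u)"
    using err_minimal[of "v - u"] u_int v_int u_1_pos u_1_less
    by (simp add: Ints_diff approx_err_diff e\<^sub>u_def e\<^sub>v_def)
  then have "v $ 1 * \<zeta>\<^sub>u \<le> tail_norm (v $ 1 *\<^sub>R (e\<^sub>v - e\<^sub>u))"
    using u_1_pos u_1_less by (simp add: tail_norm_scaleR)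
  also have "v $ 1 *\<^sub>R (e\<^sub>v - e\<^sub>u) = (v $ 1 - u $ 1) *\<^sub>R e\<^sub>v - m"
    by (simp add: m algebra_simps)
  also have "tail_norm \<dots> \<le> (v $ 1 - u $ 1) * \<zeta>\<^sub>v + tail_norm m"
    by (rule order_trans[OF tail_norm_diff_le]) (use u_1_less in \<open>simp add: e\<^sub>v_def tail_norm_scaleR\<close>)
  finally have second: "v $ 1 * \<zeta>\<^sub>u \<le> (v $ 1 - u $ 1) * \<zeta>\<^sub>v + tail_norm m" .
  have "v $ 1 * \<zeta>\<^sub>v \<le> v $ 1 * \<zeta>\<^sub>u"
    using err_less u_1_pos u_1_less by (intro mult_left_mono) auto
  then show ?thesis
    using first second unfolding m_def[symmetric] by (simp add: algebra_simps)
qed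

lemma gram_pos: "0 < gram u v"
proof -
  have "0 < v $ 1 * \<zeta>\<^sub>u"
    using u_1_pos u_1_less zeta_u_pos by simp
  then have "0 < (tail_norm (u $ 1 *\<^sub>R v - v $ 1 *\<^sub>R u))\<^sup>2"
    using le_twice_tail_norm_minors by simp
  then show ?thesis
    using tail_norm_minors_sq_le_gram[of u v] by linarith
qed

lemma gram_le: "gram u v \<le> 12 * \<zeta>\<^sub>u\<^sup>2 * (v \<bullet> v)"
proof -
  define \<tau> where "\<tau> = u $ 1 / v $ 1"
  define w where "w = u - \<tau> *\<^sub>R v"
  have \<tau>: "0 < \<tau>" "\<tau> < 1" "\<tau> * v $ 1 = u $ 1"
    using u_1_pos u_1_less by (simp_all add: \<tau>_def)
  then have "w $ 1 = 0"
    by (simp add: w_def)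
  then have "w = \<tau> *\<^sub>R approx_err \<Theta> v - approx_err \<Theta> u"
    by (simp add: w_def approx_err_def algebra_simps)
  then have "tail_norm w \<le> \<tau> * \<zeta>\<^sub>v + \<zeta>\<^sub>u"
    using tail_norm_diff_le[of "\<tau> *\<^sub>R approx_err \<Theta> v" "approx_err \<Theta> u"] \<tau> by (simp add: tail_norm_scaleR)
  moreover have "\<tau> * \<zeta>\<^sub>v \<le> \<zeta>\<^sub>v"
    using \<tau> tail_norm_nonneg[of "approx_err \<Theta> v"] by (simp add: mult_left_le_one_le)
  ultimately have "tail_norm w \<le> 2 * \<zeta>\<^sub>u"
    using err_less by linarith
  then have "(tail_norm w)\<^sup>2 \<le> (2 * \<zeta>\<^sub>u)\<^sup>2"
    using tail_norm_nonneg[of w] by (rule power_mono)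
  then have "w \<bullet> w \<le> 12 * \<zeta>\<^sub>u\<^sup>2"
    using inner_self_le_tail_norm[OF \<open>w $ 1 = 0\<close>] by (simp add: power_mult_distrib)
  then have "(v \<bullet> v) * (w \<bullet> w) \<le> (v \<bullet> v) * (12 * \<zeta>\<^sub>u\<^sup>2)"
    by (simp add: mult_left_mono)
  then show ?thesis
    using gram_le_inner_mult[of u v \<tau>] unfolding w_def by (simp add: algebra_simps)
qed

end

lemma abs_theta_err_eq_imp_eq:
  assumes indep: "\<And>a0 a1 a2 a3 :: int.
      real_of_int a0 + real_of_int a1 * t1 + real_of_int a2 * t2 + real_of_int a3 * t3 = 0 \<Longrightarrow>
      a0 = 0 \<and> a1 = 0 \<and> a2 = 0 \<and> a3 = 0"
    and ij: "i \<in> {2, 3, 4}" "j \<in> {2, 3, 4}" and "0 < n" "0 < m"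
    and "\<bar>of_int n * theta_vec t1 t2 t3 $ i - of_int k\<bar> = \<bar>of_int m * theta_vec t1 t2 t3 $ j - of_int k'\<bar>"
  shows "n = m"
proof -
  obtain s :: int where s: "s = 1 \<or> s = -1"
    and eq: "of_int n * theta_vec t1 t2 t3 $ i - of_int k = of_int s * (of_int m * theta_vec t1 t2 t3 $ j - of_int k')"
  proof (cases "of_int n * theta_vec t1 t2 t3 $ i - of_int k = of_int m * theta_vec t1 t2 t3 $ j - of_int k'")
    case True
    then show ?thesis
      using that[of 1] by simp
  next
    case False
    then show ?thesis
      using that[of "-1"] assms(6) by (simp add: abs_eq_iff)
  qed
  define c :: "4 \<Rightarrow> int" where "c r = (if r = i then n else 0) - s * (if r = j then m else 0)" for r
  have "real_of_int (s * k' - k) + real_of_int (c 2) * t1 + real_of_int (c 3) * t2 + real_of_int (c 4) * t3 = 0"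
    using ij eq by (auto simp: c_def algebra_simps)
  from indep[OF this] have "c 2 = 0" "c 3 = 0" "c 4 = 0"
    by simp_all
  then have "c i = 0"
    using ij by auto
  then show ?thesis
    using assms(4,5) s by (auto simp: c_def split: if_splits)
qed

locale best_approximation_vectors =
  fixes t1 t2 t3 :: real and x :: "nat \<Rightarrow> int" and z :: "nat \<Rightarrow> real^4"
  assumes indep: "\<And>a0 a1 a2 a3 :: int.
      real_of_int a0 + real_of_int a1 * t1 + real_of_int a2 * t2 + real_of_int a3 * t3 = 0 \<Longrightarrow>
      a0 = 0 \<and> a1 = 0 \<and> a2 = 0 \<and> a3 = 0"
    and x_mono: "strict_mono_on {1..} x"
    and x_best: "x ` {1..} = {n. best_approx t1 t2 t3 n}"
    and z_def: "\<And>l. l \<ge> 1 \<Longrightarrow>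
      z l $ 1 = real_of_int (x l) \<and>
      z l $ 2 \<in> \<int> \<and> ndist (t1 * real_of_int (x l)) = \<bar>t1 * real_of_int (x l) - z l $ 2\<bar> \<and>
      z l $ 3 \<in> \<int> \<and> ndist (t2 * real_of_int (x l)) = \<bar>t2 * real_of_int (x l) - z l $ 3\<bar> \<and>
      z l $ 4 \<in> \<int> \<and> ndist (t3 * real_of_int (x l)) = \<bar>t3 * real_of_int (x l) - z l $ 4\<bar>"
begin

abbreviation "\<Theta> \<equiv> theta_vec t1 t2 t3"

lemma best_approx_x: "1 \<le> l \<Longrightarrow> best_approx t1 t2 t3 (x l)"
  using x_best by auto

lemma x_pos: "1 \<le> l \<Longrightarrow> 0 < x l"
  using best_approx_x by (simp add: best_approx_def)

lemma x_less_Suc: "1 \<le> l \<Longrightarrow> x l < x (Suc l)"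
  using x_mono by (simp add: strict_mono_on_def)

lemma z_int: "1 \<le> l \<Longrightarrow> \<forall>i. z l $ i \<in> \<int>"
  using z_def by (auto simp: forall_4)

lemma zeta_x_eq: "1 \<le> l \<Longrightarrow> zeta t1 t2 t3 (x l) = tail_norm (approx_err \<Theta> (z l))"
  using z_def by (simp add: zeta_def tail_norm_def approx_err_def mult.commute)

lemma tail_norm_approx_err_le_half:
  assumes "1 \<le> l"
  shows "tail_norm (approx_err \<Theta> (z l)) \<le> 1/2"
proof -
  have "zeta t1 t2 t3 (x l) \<le> 1/2"
    using ndist_le_half[of "t1 * of_int (x l)"] ndist_le_half[of "t2 * of_int (x l)"]
      ndist_le_half[of "t3 * of_int (x l)"] by (simp add: zeta_def)
  then show ?thesis
    using zeta_x_eq[OF assms] by simp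
qed

lemma zeta_le_if_less_next:
  assumes l: "1 \<le> l" and n: "0 < n" "n < x (Suc l)"
  shows "zeta t1 t2 t3 (x l) \<le> zeta t1 t2 t3 n"
proof -
  obtain m where m: "m \<in> {1..n}" "\<And>m'. m' \<in> {1..n} \<Longrightarrow> zeta t1 t2 t3 m \<le> zeta t1 t2 t3 m'"
    using ex_is_arg_min_if_finite[of "{1..n}" "zeta t1 t2 t3"] n by (auto simp: is_arg_min_linorder)
  then have "best_approx t1 t2 t3 m"
    by (simp add: best_approx_iff)
  then obtain p where p: "1 \<le> p" "m = x p"
    using x_best by (metis (mono_tags, lifting) atLeast_iff imageE mem_Collect_eq)
  have "p \<le> l"
  proof (rule ccontr)
    assume "\<not> p \<le> l"
    then have "x (Suc l) \<le> x p"
      using l by (intro strict_mono_on_leD[OF x_mono]) auto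
    then show False
      using p m n by auto
  qed
  then have "x p \<le> x l"
    using p by (intro strict_mono_on_leD[OF x_mono]) auto
  then have "zeta t1 t2 t3 (x l) \<le> zeta t1 t2 t3 m"
    using best_approx_x[OF l] p x_pos by (simp add: best_approx_iff)
  also have "\<dots> \<le> zeta t1 t2 t3 n"
    using m n by simp
  finally show ?thesis .
qed

lemma zeta_Suc_less:
  assumes l: "1 \<le> l"
  shows "zeta t1 t2 t3 (x (Suc l)) < zeta t1 t2 t3 (x l)"
proof -
  have "zeta t1 t2 t3 (x (Suc l)) \<le> zeta t1 t2 t3 (x l)"
    using best_approx_x[of "Suc l"] x_pos[OF l] x_less_Suc[OF l] by (simp add: best_approx_iff)
  moreover have "zeta t1 t2 t3 (x (Suc l)) \<noteq> zeta t1 t2 t3 (x l)"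
  proof
    assume same: "zeta t1 t2 t3 (x (Suc l)) = zeta t1 t2 t3 (x l)"
    have err: "\<exists>i\<in>{2, 3, 4}. \<exists>k. zeta t1 t2 t3 (x l') = \<bar>of_int (x l') * \<Theta> $ i - of_int k\<bar>"
      if l': "1 \<le> l'" for l'
    proof -
      obtain i where "i \<in> {2, 3, 4}" "zeta t1 t2 t3 (x l') = \<bar>approx_err \<Theta> (z l') $ i\<bar>"
        using tail_norm_eq_abs_nth zeta_x_eq[OF l'] by metis
      moreover obtain k where "z l' $ i = of_int k"
        using z_int[OF l'] by (meson Ints_cases)
      ultimately show ?thesis
        using z_def[OF l'] by (auto simp: approx_err_def)
    qed
    obtain i k where i: "i \<in> {2, 3, 4}" "zeta t1 t2 t3 (x l) = \<bar>of_int (x l) * \<Theta> $ i - of_int k\<bar>"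
      using err[OF l] by blast
    obtain j k' where j: "j \<in> {2, 3, 4}"
      "zeta t1 t2 t3 (x (Suc l)) = \<bar>of_int (x (Suc l)) * \<Theta> $ j - of_int k'\<bar>"
      using err[OF le_SucI[OF l]] by blast
    have "\<bar>of_int (x l) * \<Theta> $ i - of_int k\<bar> = \<bar>of_int (x (Suc l)) * \<Theta> $ j - of_int k'\<bar>"
      by (simp only: i(2)[symmetric] j(2)[symmetric] same)
    then have "x l = x (Suc l)"
      using abs_theta_err_eq_imp_eq[OF indep i(1) j(1) x_pos[OF l] x_pos[OF le_SucI[OF l]]] by blast
    then show False
      using x_less_Suc[OF l] by simp
  qed
  ultimately show ?thesis
    by simp
qed

lemma consecutive_pair: "1 \<le> l \<Longrightarrow> consecutive_pair \<Theta> (z l) (z (Suc l))"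
proof unfold_locales
  assume l: "1 \<le> l"
  show "\<forall>i. z l $ i \<in> \<int>" "\<forall>i. z (Suc l) $ i \<in> \<int>"
    using z_int l by auto
  show "0 < z l $ 1" "z l $ 1 < z (Suc l) $ 1"
    using z_def l x_pos[OF l] x_less_Suc[OF l] by auto
  show "tail_norm (approx_err \<Theta> (z (Suc l))) < tail_norm (approx_err \<Theta> (z l))"
    using zeta_Suc_less[OF l] zeta_x_eq l by simp
  fix w :: "real^4"
  assume w: "\<forall>i. w $ i \<in> \<int>" "0 < w $ 1" "w $ 1 < z (Suc l) $ 1"
  obtain n where n: "w $ 1 = of_int n"
    using w(1) by (meson Ints_cases)
  have "tail_norm (approx_err \<Theta> (z l)) = zeta t1 t2 t3 (x l)"
    using zeta_x_eq[OF l] by simp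
  also have "\<dots> \<le> zeta t1 t2 t3 n"
    using zeta_le_if_less_next[OF l] w n z_def[of "Suc l"] by simp
  also have "\<dots> \<le> tail_norm (approx_err \<Theta> w)"
    using zeta_le_tail_norm_approx_err[OF w(1) n] .
  finally show "tail_norm (approx_err \<Theta> (z l)) \<le> tail_norm (approx_err \<Theta> w)" .
qed

lemma covol2_bounds:
  assumes l: "1 \<le> l" and \<pi>: "subspace \<pi>" "dim \<pi> = 2" "z l \<in> \<pi>" "z (Suc l) \<in> \<pi>"
  shows "1 / (2 * sqrt (3 * (1 + (\<bar>t1\<bar> + 1/2)\<^sup>2 + (\<bar>t2\<bar> + 1/2)\<^sup>2 + (\<bar>t3\<bar> + 1/2)\<^sup>2)))
        * covol2 (int_points \<pi>) \<le> zeta t1 t2 t3 (x l) * real_of_int (x (l + 1)) \<and>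
      zeta t1 t2 t3 (x l) * real_of_int (x (l + 1)) \<le> 2 * covol2 (int_points \<pi>)"
proof -
  interpret consecutive_pair \<Theta> "z l" "z (Suc l)"
    using l by (rule consecutive_pair)
  define S where "S = 1 + (\<bar>t1\<bar> + 1/2)\<^sup>2 + (\<bar>t2\<bar> + 1/2)\<^sup>2 + (\<bar>t3\<bar> + 1/2)\<^sup>2"
  define X where "X = real_of_int (x (Suc l))"
  have S: "0 < S"
    by (simp add: S_def add_pos_nonneg)
  have covol2: "covol2 (int_points \<pi>) = sqrt (gram (z l) (z (Suc l)))"
    using int_points_eq_int_span[OF \<pi> gram_pos u_int v_int empty_triangle] covol2_int_span[OF gram_pos]
    by simp
  have zeta: "zeta t1 t2 t3 (x l) = \<zeta>\<^sub>u" and X: "z (Suc l) $ 1 = X" "1 \<le> X"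
    using zeta_x_eq[OF l] z_def[of "Suc l"] x_pos[of "Suc l"] by (simp_all add: X_def)
  have "tail_norm (z l $ 1 *\<^sub>R z (Suc l) - z (Suc l) $ 1 *\<^sub>R z l) \<le> sqrt (gram (z l) (z (Suc l)))"
    by (rule real_le_rsqrt[OF tail_norm_minors_sq_le_gram])
  then have upper: "X * \<zeta>\<^sub>u \<le> 2 * covol2 (int_points \<pi>)"
    using le_twice_tail_norm_minors X covol2 by simp
  have "z (Suc l) \<bullet> z (Suc l) \<le> X\<^sup>2 * S"
    using inner_self_le_if_approx_err_le_half[of "z (Suc l)" \<Theta>] X
      tail_norm_approx_err_le_half[OF le_SucI[OF l]]
    by (simp add: S_def)
  then have "gram (z l) (z (Suc l)) \<le> 12 * \<zeta>\<^sub>u\<^sup>2 * (X\<^sup>2 * S)"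
    by (rule order_trans[OF gram_le mult_left_mono]) simp
  also have "\<dots> = (2 * sqrt (3 * S) * (X * \<zeta>\<^sub>u))\<^sup>2"
    using S by (simp add: power_mult_distrib)
  finally have "sqrt (gram (z l) (z (Suc l))) \<le> sqrt ((2 * sqrt (3 * S) * (X * \<zeta>\<^sub>u))\<^sup>2)"
    by (rule real_sqrt_le_mono)
  then have "covol2 (int_points \<pi>) \<le> 2 * sqrt (3 * S) * (X * \<zeta>\<^sub>u)"
    unfolding covol2 using S X zeta_u_pos by (simp add: abs_mult)
  then have lower: "1 / (2 * sqrt (3 * S)) * covol2 (int_points \<pi>) \<le> X * \<zeta>\<^sub>u"
    using S by (simp add: pos_divide_le_eq mult.commute mult.left_commute)
  show ?thesis
    using upper lower unfolding zeta X_def S_def by (simp add: mult.commute)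
qed

end

theorem lemma1:
  fixes t1 t2 t3 :: real
    and x :: "nat \<Rightarrow> int"
    and z :: "nat \<Rightarrow> real^4"
    and \<pi> :: "(real^4) set"
    and \<nu> k :: nat
  assumes indep: "\<And>a0 a1 a2 a3 :: int.
      real_of_int a0 + real_of_int a1 * t1 + real_of_int a2 * t2 + real_of_int a3 * t3 = 0 \<Longrightarrow>
      a0 = 0 \<and> a1 = 0 \<and> a2 = 0 \<and> a3 = 0"
    and x_mono: "strict_mono_on {1..} x"
    and x_best: "x ` {1..} = {n. best_approx t1 t2 t3 n}"
    and z_def: "\<And>l. l \<ge> 1 \<Longrightarrow>
      z l $ 1 = real_of_int (x l) \<and>
      z l $ 2 \<in> \<int> \<and> ndist (t1 * real_of_int (x l)) = \<bar>t1 * real_of_int (x l) - z l $ 2\<bar> \<and>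
      z l $ 3 \<in> \<int> \<and> ndist (t2 * real_of_int (x l)) = \<bar>t2 * real_of_int (x l) - z l $ 3\<bar> \<and>
      z l $ 4 \<in> \<int> \<and> ndist (t3 * real_of_int (x l)) = \<bar>t3 * real_of_int (x l) - z l $ 4\<bar>"
    and nu_pos: "1 \<le> \<nu>"
    and nu_k: "\<nu> < k"
    and pi_sub: "subspace \<pi>"
    and pi_dim: "dim \<pi> = 2"
    and z_in: "\<And>l. \<nu> \<le> l \<Longrightarrow> l \<le> k \<Longrightarrow> z l \<in> \<pi>"
  shows "(\<forall>l. \<nu> \<le> l \<and> l \<le> k - 1 \<longrightarrow>
            1 / (2 * sqrt (3 * (1 + (\<bar>t1\<bar> + 1/2)\<^sup>2 + (\<bar>t2\<bar> + 1/2)\<^sup>2 + (\<bar>t3\<bar> + 1/2)\<^sup>2)))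
              * covol2 (int_points \<pi>) \<le> zeta t1 t2 t3 (x l) * real_of_int (x (l + 1)) \<and>
            zeta t1 t2 t3 (x l) * real_of_int (x (l + 1)) \<le> 2 * covol2 (int_points \<pi>))
       \<and> covol2 (int_points \<pi>) \<ge> 1/2 * min (zeta t1 t2 t3 (x \<nu>) * real_of_int (x (\<nu> + 1)))
                                           (zeta t1 t2 t3 (x (k - 1)) * real_of_int (x k))"
proof -
  interpret best_approximation_vectors t1 t2 t3 x z
    using indep x_mono x_best z_def by (rule best_approximation_vectors.intro)
  have bounds: "1 / (2 * sqrt (3 * (1 + (\<bar>t1\<bar> + 1/2)\<^sup>2 + (\<bar>t2\<bar> + 1/2)\<^sup>2 + (\<bar>t3\<bar> + 1/2)\<^sup>2)))
        * covol2 (int_points \<pi>) \<le> zeta t1 t2 t3 (x l) * real_of_int (x (l + 1)) \<and>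
      zeta t1 t2 t3 (x l) * real_of_int (x (l + 1)) \<le> 2 * covol2 (int_points \<pi>)"
    if "\<nu> \<le> l" "l \<le> k - 1" for l
    using covol2_bounds[OF _ pi_sub pi_dim z_in[of l] z_in[of "Suc l"]] that nu_pos nu_k by simp
  have "zeta t1 t2 t3 (x \<nu>) * real_of_int (x (\<nu> + 1)) \<le> 2 * covol2 (int_points \<pi>)"
    using bounds[of \<nu>] nu_k by simp
  then have "1/2 * min (zeta t1 t2 t3 (x \<nu>) * real_of_int (x (\<nu> + 1))) (zeta t1 t2 t3 (x (k - 1)) * real_of_int (x k))
      \<le> covol2 (int_points \<pi>)"
    by linarith
  with bounds show ?thesis
    by blast
qed

end
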